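(* Let $\{X_t\}_{t\in\mathbb N^+}$ be a real-valued process adapted to a filtration $\{\mathcal F_t\}_{t\in\mathbb N}$ with $\mathcal F_0$ trivial, such that for all $t\in\mathbb N^+$, $\mathbb E[X_t\mid\mathcal F_{t-1}]=\mu$ (a constant) and $\mathbb E[(X_t-\mu)^2\mid\mathcal F_{t-1}]\le\sigma^2$. Let $\{\lambda_t\}_{t\in\mathbb N^+}$ be any predictable process (each $\lambda_t$ is $\mathcal F_{t-1}$-measurable). Then the process $$M^{\mathsf{SN}}_t=\prod_{i=1}^t\exp\left(\lambda_i(X_i-\mu)-\frac{\lambda_i^2\left((X_i-\mu)^2+2\sigma^2\right)}{6}\right),\qquad M^{\mathsf{SN}}_0=1,$$ is a nonnegative supermartingale with respect to $\{\mathcal F_t\}$. *)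

theory Defs
  imports "HOL-Probability.Probability"
begin

definition is_filtration :: "'a measure \<Rightarrow> (nat \<Rightarrow> 'a measure) \<Rightarrow> bool" where
  "is_filtration M F \<longleftrightarrow> (\<forall>t. subalgebra M (F t)) \<and> (\<forall>s t. s \<le> t \<longrightarrow> sets (F s) \<subseteq> sets (F t))"

definition supermartingale :: "'a measure \<Rightarrow> (nat \<Rightarrow> 'a measure) \<Rightarrow> (nat \<Rightarrow> 'a \<Rightarrow> real) \<Rightarrow> bool" where
  "supermartingale M F Y \<longleftrightarrow>
     (\<forall>t. Y t \<in> borel_measurable (F t)) \<and> (\<forall>t. integrable M (Y t)) \<and>
     (\<forall>s t. s \<le> t \<longrightarrow> (AE x in M. real_cond_exp M (F s) (Y t) x \<le> Y s x))"

definition M_SN :: "(nat \<Rightarrow> 'a \<Rightarrow> real) \<Rightarrow> (nat \<Rightarrow> 'a \<Rightarrow> real) \<Rightarrow> real \<Rightarrow> real \<Rightarrow> nat \<Rightarrow> 'a \<Rightarrow> real" where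
  "M_SN X lam \<mu> \<sigma> t \<omega> =
     (\<Prod>i\<in>{1..t}. exp (lam i \<omega> * (X i \<omega> - \<mu>)
        - (lam i \<omega>)\<^sup>2 * ((X i \<omega> - \<mu>)\<^sup>2 + 2 * \<sigma>\<^sup>2) / 6))"

end

theory Submission
  imports Defs
begin

(* The pointwise inequality exp (z - z^2/6) <= 1 + z + z^2/3 bounds the t-th factor of M^SN by
   exp (-u) * (1 + lam (X - mu) + lam^2 (X - mu)^2 / 3) with u = lam^2 sigma^2 / 3. Conditioning on
   F_(t-1), the linear term vanishes and the quadratic one is at most u, so the conditional expectation
   of the factor is at most exp (-u) * (1 + u) <= 1. As lam_t is unbounded, this is carried out on the
   F_(t-1)-measurable sets {|lam_t| <= n}, where every term is integrable. Each factor is at most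
   exp (3/2), so M^SN_t is bounded, and the one-step inequality iterates by the tower property. *)

definition sn_factor :: "real \<Rightarrow> real \<Rightarrow> real \<Rightarrow> real" where
  "sn_factor l y s = exp (l * y - l\<^sup>2 * (y\<^sup>2 + 2 * s\<^sup>2) / 6)"

lemma exp_minus_square_sixth_le: "exp (z - z\<^sup>2 / 6) \<le> 1 + z + z\<^sup>2 / (3::real)"
proof -
  define q where "q z = 1 + z + z\<^sup>2 / 3" for z :: real
  define f where "f z = ln (q z) - z + z\<^sup>2 / 6" for z :: real
  have q_pos: "0 < q z" for z
  proof -
    have "q z = (z + 3 / 2)\<^sup>2 / 3 + 1 / 4"
      by (simp add: q_def power2_eq_square field_simps)
    then show ?thesis by (simp add: add_nonneg_pos)
  qed
  have f_deriv: "(f has_real_derivative z ^ 3 / (9 * q z)) (at z)" for z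
  proof -
    have "(f has_real_derivative (1 + 2 * z / 3) / q z - 1 + z / 3) (at z)"
      unfolding f_def q_def using q_pos[of z, unfolded q_def]
      by (auto intro!: derivative_eq_intros simp: field_simps)
    moreover have "(1 + 2 * z / 3) / q z - 1 + z / 3 = z ^ 3 / (9 * q z)"
      using q_pos[of z] by (simp add: q_def field_simps power2_eq_square power3_eq_cube)
    ultimately show ?thesis by simp
  qed
  have "f 0 \<le> f z"
  proof (cases "0 \<le> z")
    case True
    show ?thesis
    proof (rule DERIV_nonneg_imp_nondecreasing[OF True])
      fix x :: real assume "0 \<le> x"
      then show "\<exists>y. DERIV f x :> y \<and> 0 \<le> y"
        using f_deriv[of x] q_pos[of x] by auto
    qed
  next
    case False
    show ?thesis
    proof (rule DERIV_nonpos_imp_nonincreasing[of z 0])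
      show "z \<le> 0" using False by simp
      fix x :: real assume "x \<le> 0"
      then have "x ^ 3 \<le> 0" by (simp add: power_le_zero_eq)
      then show "\<exists>y. DERIV f x :> y \<and> y \<le> 0"
        using f_deriv[of x] q_pos[of x] by (auto simp: divide_nonpos_pos)
    qed
  qed
  then have "z - z\<^sup>2 / 6 \<le> ln (q z)" by (simp add: f_def q_def)
  then have "exp (z - z\<^sup>2 / 6) \<le> q z" using q_pos[of z] by (simp add: ln_ge_iff)
  then show ?thesis by (simp add: q_def)
qed

lemma sn_factor_le_quadratic:
  "sn_factor l y s \<le> exp (- (l\<^sup>2 * s\<^sup>2 / 3)) * (1 + l * y + l\<^sup>2 * y\<^sup>2 / 3)"
proof -
  have "sn_factor l y s = exp (- (l\<^sup>2 * s\<^sup>2 / 3)) * exp (l * y - (l * y)\<^sup>2 / 6)"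
    by (simp add: sn_factor_def power_mult_distrib algebra_simps flip: exp_add)
  also have "\<dots> \<le> exp (- (l\<^sup>2 * s\<^sup>2 / 3)) * (1 + l * y + (l * y)\<^sup>2 / 3)"
    by (intro mult_left_mono exp_minus_square_sixth_le) auto
  finally show ?thesis by (simp add: power_mult_distrib)
qed

lemma sn_factor_pos: "0 < sn_factor l y s"
  by (simp add: sn_factor_def)

lemma sn_factor_le_exp_3_2: "sn_factor l y s \<le> exp (3 / 2)"
proof -
  have "l * y - l\<^sup>2 * (y\<^sup>2 + 2 * s\<^sup>2) / 6 = 3 / 2 - ((l * y - 3)\<^sup>2 + 2 * l\<^sup>2 * s\<^sup>2) / 6"
    by (simp add: power2_eq_square field_simps)
  also have "\<dots> \<le> 3 / 2" by simp
  finally show ?thesis by (simp add: sn_factor_def)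
qed

lemma exp_minus_mult_one_plus_le_one: "exp (- u) * (1 + u) \<le> (1::real)"
proof -
  have "exp (- u) * (1 + u) \<le> exp (- u) * exp u"
    by (intro mult_left_mono exp_ge_add_one_self) auto
  then show ?thesis by (simp add: exp_minus)
qed

lemma abs_indicator_mult_le:
  fixes c g K :: real
  assumes "0 \<le> c" "c \<le> 1" and "x \<in> A \<Longrightarrow> \<bar>g\<bar> \<le> K" and "0 \<le> K"
  shows "\<bar>indicator A x * c * g\<bar> \<le> K"
proof (cases "x \<in> A")
  case True
  then have "c * \<bar>g\<bar> \<le> 1 * K"
    using assms by (intro mult_mono) auto
  then show ?thesis using True assms(1) by (simp add: abs_mult)
qed (simp add: assms(4))

lemma integrable_bounded_mult:
  fixes c g :: "'a \<Rightarrow> real"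
  assumes "integrable M g" and "c \<in> borel_measurable M"
    and "\<And>x. x \<in> space M \<Longrightarrow> \<bar>c x\<bar> \<le> B"
  shows "integrable M (\<lambda>x. c x * g x)"
proof (rule Bochner_Integration.integrable_bound[where f = "\<lambda>x. B * g x"])
  show "integrable M (\<lambda>x. B * g x)" using assms(1) by simp
  show "(\<lambda>x. c x * g x) \<in> borel_measurable M"
    using assms(1,2) by (simp add: borel_measurable_integrable)
  show "AE x in M. norm (c x * g x) \<le> norm (B * g x)"
  proof (rule AE_I2)
    fix x assume "x \<in> space M"
    then have "\<bar>c x\<bar> * \<bar>g x\<bar> \<le> \<bar>B\<bar> * \<bar>g x\<bar>"
      using assms(3) by (intro mult_right_mono) force+
    then show "norm (c x * g x) \<le> norm (B * g x)" by (simp add: abs_mult)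
  qed
qed

lemma real_cond_exp_le_of_nn_cond_exp_le:
  assumes "AE x in M. nn_cond_exp M F (\<lambda>x. ennreal (f x)) x \<le> ennreal c" and "0 \<le> c"
  shows "AE x in M. real_cond_exp M F f x \<le> c"
  using assms(1)
proof eventually_elim
  case (elim x)
  then have "enn2real (nn_cond_exp M F (\<lambda>x. ennreal (f x)) x) \<le> c"
    using assms(2) by (intro enn2real_leI)
  then show ?case
    unfolding real_cond_exp_def
    using enn2real_nonneg[of "nn_cond_exp M F (\<lambda>x. ennreal (- f x)) x"] by linarith
qed

lemma (in sigma_finite_subalgebra) real_cond_exp_mult_le_self:
  assumes [measurable]: "Z \<in> borel_measurable F" "G \<in> borel_measurable M"
    and "\<And>x. 0 \<le> Z x" and "integrable M (\<lambda>x. Z x * G x)"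
    and "AE x in M. real_cond_exp M F G x \<le> 1"
  shows "AE x in M. real_cond_exp M F (\<lambda>x. Z x * G x) x \<le> Z x"
  using real_cond_exp_mult[OF assms(1,2,4)] assms(5)
proof eventually_elim
  case (elim x)
  then show ?case using assms(3)[of x] by (simp add: mult_left_le)
qed

lemma (in sigma_finite_subalgebra) real_cond_exp_mono_on:
  assumes [measurable]: "A \<in> sets F" and "integrable M G" "integrable M H"
    and "\<And>x. x \<in> A \<Longrightarrow> G x \<le> H x"
  shows "AE x in M. x \<in> A \<longrightarrow> real_cond_exp M F G x \<le> real_cond_exp M F H x"
proof -
  have "A \<in> sets M"
    using subalg assms(1) by (auto simp: subalgebra_def)
  then have int: "integrable M (\<lambda>x. indicator A x * G x)" "integrable M (\<lambda>x. indicator A x * H x)"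
    using integrable_real_mult_indicator assms(2,3) by (simp_all add: mult.commute)
  have "AE x in M. real_cond_exp M F (\<lambda>x. indicator A x * G x) x
          \<le> real_cond_exp M F (\<lambda>x. indicator A x * H x) x"
    using assms(4) by (intro real_cond_exp_mono int) (auto split: split_indicator)
  moreover have "AE x in M. real_cond_exp M F (\<lambda>x. indicator A x * G x) x = indicator A x * real_cond_exp M F G x"
    using int(1) assms(2) by (intro real_cond_exp_mult) auto
  moreover have "AE x in M. real_cond_exp M F (\<lambda>x. indicator A x * H x) x = indicator A x * real_cond_exp M F H x"
    using int(2) assms(3) by (intro real_cond_exp_mult) auto
  ultimately show ?thesis
    by eventually_elim (auto simp: indicator_def)
qed

context finite_measure_subalgebra
begin

lemma integrable_of_nn_cond_exp_le:
  assumes [measurable]: "f \<in> borel_measurable M" and "\<And>x. 0 \<le> f x"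
    and "AE x in M. nn_cond_exp M F (\<lambda>x. ennreal (f x)) x \<le> ennreal c"
  shows "integrable M f"
proof (rule integrableI_nonneg)
  have "(\<integral>\<^sup>+x. ennreal (f x) \<partial>M) = (\<integral>\<^sup>+x. 1 * nn_cond_exp M F (\<lambda>x. ennreal (f x)) x \<partial>M)"
    using nn_cond_exp_intg[of "\<lambda>_. 1" "\<lambda>x. ennreal (f x)"] by simp
  also have "\<dots> \<le> (\<integral>\<^sup>+x. ennreal c \<partial>M)"
    using assms(3) by (intro nn_integral_mono_AE) auto
  also have "\<dots> < \<infinity>"
    by (simp add: ennreal_mult_eq_top_iff less_top[symmetric])
  finally show "(\<integral>\<^sup>+x. ennreal (f x) \<partial>M) < \<infinity>" .
qed (use assms in auto)

lemma real_cond_exp_quadratic: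
  fixes b0 b1 b2 Y :: "'a \<Rightarrow> real"
  assumes [measurable]: "b0 \<in> borel_measurable F" "b1 \<in> borel_measurable F" "b2 \<in> borel_measurable F"
    and "\<And>x. x \<in> space M \<Longrightarrow> \<bar>b0 x\<bar> \<le> B0"
    and "\<And>x. x \<in> space M \<Longrightarrow> \<bar>b1 x\<bar> \<le> B1"
    and "\<And>x. x \<in> space M \<Longrightarrow> \<bar>b2 x\<bar> \<le> B2"
    and Y: "integrable M Y" "integrable M (\<lambda>x. (Y x)\<^sup>2)"
  shows "integrable M (\<lambda>x. b0 x + b1 x * Y x + b2 x * (Y x)\<^sup>2)"
    and "AE x in M. real_cond_exp M F (\<lambda>x. b0 x + b1 x * Y x + b2 x * (Y x)\<^sup>2) x
           = b0 x + b1 x * real_cond_exp M F Y x + b2 x * real_cond_exp M F (\<lambda>x. (Y x)\<^sup>2) x"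
proof -
  note b_M = assms(1-3)[THEN measurable_from_subalg[OF subalg]]
  have b0: "integrable M b0"
    using assms(4) by (intro integrable_const_bound[where B = B0]) (auto simp: b_M(1))
  have b1Y: "integrable M (\<lambda>x. b1 x * Y x)"
    using assms(5) by (intro integrable_bounded_mult[OF Y(1) b_M(2)])
  have b2Y: "integrable M (\<lambda>x. b2 x * (Y x)\<^sup>2)"
    using assms(6) by (intro integrable_bounded_mult[OF Y(2) b_M(3)])
  show "integrable M (\<lambda>x. b0 x + b1 x * Y x + b2 x * (Y x)\<^sup>2)"
    using b0 b1Y b2Y by simp
  have "AE x in M. real_cond_exp M F (\<lambda>x. b0 x + b1 x * Y x + b2 x * (Y x)\<^sup>2) x
          = real_cond_exp M F (\<lambda>x. b0 x + b1 x * Y x) x + real_cond_exp M F (\<lambda>x. b2 x * (Y x)\<^sup>2) x"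
    using b0 b1Y b2Y by (intro real_cond_exp_add) auto
  moreover have "AE x in M. real_cond_exp M F (\<lambda>x. b0 x + b1 x * Y x) x
          = real_cond_exp M F b0 x + real_cond_exp M F (\<lambda>x. b1 x * Y x) x"
    using b0 b1Y by (intro real_cond_exp_add)
  moreover have "AE x in M. real_cond_exp M F b0 x = b0 x"
    using b0 by (intro real_cond_exp_F_meas) auto
  moreover have "AE x in M. real_cond_exp M F (\<lambda>x. b1 x * Y x) x = b1 x * real_cond_exp M F Y x"
    using b1Y Y by (intro real_cond_exp_mult) auto
  moreover have "AE x in M. real_cond_exp M F (\<lambda>x. b2 x * (Y x)\<^sup>2) x
          = b2 x * real_cond_exp M F (\<lambda>x. (Y x)\<^sup>2) x"
    using b2Y Y by (intro real_cond_exp_mult) auto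
  ultimately show "AE x in M. real_cond_exp M F (\<lambda>x. b0 x + b1 x * Y x + b2 x * (Y x)\<^sup>2) x
           = b0 x + b1 x * real_cond_exp M F Y x + b2 x * real_cond_exp M F (\<lambda>x. (Y x)\<^sup>2) x"
    by eventually_elim simp
qed

lemma real_cond_exp_sn_factor_le_one_on:
  assumes [measurable]: "L \<in> borel_measurable F" "A \<in> sets F"
    and L_bound: "\<And>x. x \<in> A \<Longrightarrow> \<bar>L x\<bar> \<le> B"
    and Y: "integrable M Y" "integrable M (\<lambda>x. (Y x)\<^sup>2)"
    and EY: "AE x in M. real_cond_exp M F Y x = 0"
    and EY2: "AE x in M. real_cond_exp M F (\<lambda>x. (Y x)\<^sup>2) x \<le> s\<^sup>2"
  shows "AE x in M. x \<in> A \<longrightarrow> real_cond_exp M F (\<lambda>x. sn_factor (L x) (Y x) s) x \<le> 1"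
proof -
  define G where "G x = sn_factor (L x) (Y x) s" for x
  define c where "c x = exp (- ((L x)\<^sup>2 * s\<^sup>2 / 3))" for x
  \<comment> \<open>On A the coefficients of the quadratic bound for G are bounded, so the bound is integrable.\<close>
  define b0 where "b0 x = indicator A x * c x * 1" for x
  define b1 where "b1 x = indicator A x * c x * L x" for x
  define b2 where "b2 x = indicator A x * c x * ((L x)\<^sup>2 / 3)" for x
  define H where "H x = b0 x + b1 x * Y x + b2 x * (Y x)\<^sup>2" for x
  have b_meas [measurable]: "b0 \<in> borel_measurable F" "b1 \<in> borel_measurable F" "b2 \<in> borel_measurable F"
    unfolding b0_def b1_def b2_def c_def by measurable
  have c_pos: "0 < c x" and c_le_1: "c x \<le> 1" for x
    by (simp_all add: c_def)
  have L_square_bound: "x \<in> A \<Longrightarrow> \<bar>(L x)\<^sup>2 / 3\<bar> \<le> B\<^sup>2 / 3" for x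
    using power_mono[OF L_bound abs_ge_zero, of x 2] by simp
  have "\<bar>b0 x\<bar> \<le> 1" "\<bar>b1 x\<bar> \<le> \<bar>B\<bar>" "\<bar>b2 x\<bar> \<le> B\<^sup>2 / 3" for x
    unfolding b0_def b1_def b2_def using c_pos[of x] c_le_1[of x] L_bound[of x] L_square_bound[of x]
    by (intro abs_indicator_mult_le; force)+
  note quadratic = real_cond_exp_quadratic[OF b_meas this Y, folded H_def]
  have [measurable]: "L \<in> borel_measurable M" "Y \<in> borel_measurable M"
    using measurable_from_subalg[OF subalg assms(1)] borel_measurable_integrable[OF Y(1)] by simp_all
  have G_int: "integrable M G"
    using sn_factor_pos sn_factor_le_exp_3_2 unfolding G_def sn_factor_def
    by (intro integrable_const_bound[where B = "exp (3 / 2)"]) (auto simp: less_imp_le)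
  have "G x \<le> H x" if "x \<in> A" for x
    using that sn_factor_le_quadratic[of "L x" "Y x" s]
    by (simp add: G_def H_def b0_def b1_def b2_def c_def algebra_simps)
  then have "AE x in M. x \<in> A \<longrightarrow> real_cond_exp M F G x \<le> real_cond_exp M F H x"
    by (intro real_cond_exp_mono_on G_int quadratic(1) assms(2))
  then show ?thesis
    using quadratic(2) EY EY2 unfolding G_def[symmetric]
  proof eventually_elim
    case (elim x)
    show ?case
    proof
      assume "x \<in> A"
      then have "real_cond_exp M F G x \<le> c x + c x * (L x)\<^sup>2 / 3 * real_cond_exp M F (\<lambda>x. (Y x)\<^sup>2) x"
        using elim by (simp add: b0_def b1_def b2_def)
      also have "\<dots> \<le> c x + c x * (L x)\<^sup>2 / 3 * s\<^sup>2"
        using elim c_pos[of x] by (intro add_left_mono mult_left_mono) auto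
      also have "\<dots> = exp (- ((L x)\<^sup>2 * s\<^sup>2 / 3)) * (1 + (L x)\<^sup>2 * s\<^sup>2 / 3)"
        by (simp add: c_def algebra_simps)
      also have "\<dots> \<le> 1"
        by (rule exp_minus_mult_one_plus_le_one)
      finally show "real_cond_exp M F G x \<le> 1" .
    qed
  qed
qed

lemma real_cond_exp_sn_factor_le_one:
  assumes [measurable]: "L \<in> borel_measurable F"
    and Y: "integrable M Y" "integrable M (\<lambda>x. (Y x)\<^sup>2)"
    and EY: "AE x in M. real_cond_exp M F Y x = 0"
    and EY2: "AE x in M. real_cond_exp M F (\<lambda>x. (Y x)\<^sup>2) x \<le> s\<^sup>2"
  shows "AE x in M. real_cond_exp M F (\<lambda>x. sn_factor (L x) (Y x) s) x \<le> 1"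
proof -
  have space_F: "space F = space M"
    using subalg by (simp add: subalgebra_def)
  have "{x \<in> space F. \<bar>L x\<bar> \<le> real n} \<in> sets F" for n :: nat
    by measurable
  then have "AE x in M. x \<in> {x \<in> space M. \<bar>L x\<bar> \<le> real n}
               \<longrightarrow> real_cond_exp M F (\<lambda>x. sn_factor (L x) (Y x) s) x \<le> 1" for n :: nat
    unfolding space_F by (intro real_cond_exp_sn_factor_le_one_on[OF assms(1) _ _ Y EY EY2]) auto
  then have "AE x in M. \<forall>n::nat. x \<in> {x \<in> space M. \<bar>L x\<bar> \<le> real n}
               \<longrightarrow> real_cond_exp M F (\<lambda>x. sn_factor (L x) (Y x) s) x \<le> 1"
    unfolding AE_all_countable by blast
  then show ?thesis
    using AE_space
  proof eventually_elim
    case (elim x)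
    then show ?case
      using real_nat_ceiling_ge[of "\<bar>L x\<bar>"] by blast
  qed
qed

lemma real_cond_exp_sn_factor_centered_le_one:
  assumes [measurable]: "L \<in> borel_measurable F" "X \<in> borel_measurable M"
    and "integrable M X"
    and "AE x in M. real_cond_exp M F X x = \<mu>"
    and nn: "AE x in M. nn_cond_exp M F (\<lambda>x. ennreal ((X x - \<mu>)\<^sup>2)) x \<le> ennreal (\<sigma>\<^sup>2)"
  shows "AE x in M. real_cond_exp M F (\<lambda>x. sn_factor (L x) (X x - \<mu>) \<sigma>) x \<le> 1"
proof (rule real_cond_exp_sn_factor_le_one)
  show "integrable M (\<lambda>x. X x - \<mu>)"
    using assms(3) by simp
  show "integrable M (\<lambda>x. (X x - \<mu>)\<^sup>2)"
    by (rule integrable_of_nn_cond_exp_le[OF _ _ nn]) auto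
  show "AE x in M. real_cond_exp M F (\<lambda>x. (X x - \<mu>)\<^sup>2) x \<le> \<sigma>\<^sup>2"
    by (rule real_cond_exp_le_of_nn_cond_exp_le[OF nn]) simp
  have "AE x in M. real_cond_exp M F (\<lambda>x. X x - \<mu>) x = real_cond_exp M F X x - real_cond_exp M F (\<lambda>_. \<mu>) x"
    using assms(3) by (intro real_cond_exp_diff) auto
  moreover have "AE x in M. real_cond_exp M F (\<lambda>_. \<mu>) x = \<mu>"
    by (rule real_cond_exp_F_meas) auto
  ultimately show "AE x in M. real_cond_exp M F (\<lambda>x. X x - \<mu>) x = 0"
    using assms(4) by eventually_elim simp
qed (rule assms(1))

end

lemma is_filtration_subalgebra: "is_filtration M F \<Longrightarrow> subalgebra M (F t)"
  by (simp add: is_filtration_def)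

lemma is_filtration_subalgebra_mono:
  assumes "is_filtration M F" and "s \<le> t"
  shows "subalgebra (F t) (F s)"
  using assms is_filtration_subalgebra[OF assms(1), of s] is_filtration_subalgebra[OF assms(1), of t]
  by (auto simp: is_filtration_def subalgebra_def)

lemma is_filtration_finite_measure_subalgebra:
  "finite_measure M \<Longrightarrow> is_filtration M F \<Longrightarrow> finite_measure_subalgebra M (F t)"
  by (simp add: finite_measure_subalgebra_def finite_measure_subalgebra_axioms_def is_filtration_subalgebra)

lemma supermartingaleI_one_step:
  assumes "finite_measure M" and filtration: "is_filtration M F"
    and adapted: "\<And>t. Y t \<in> borel_measurable (F t)"
    and integrable: "\<And>t. integrable M (Y t)"
    and one_step: "\<And>t. AE x in M. real_cond_exp M (F t) (Y (Suc t)) x \<le> Y t x"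
  shows "supermartingale M F Y"
proof -
  have "AE x in M. real_cond_exp M (F s) (Y t) x \<le> Y s x" if "s \<le> t" for s t
    using that
  proof (induction t rule: dec_induct)
    case base
    interpret finite_measure_subalgebra M "F s"
      using assms(1) filtration by (rule is_filtration_finite_measure_subalgebra)
    show ?case
      using real_cond_exp_F_meas[OF integrable adapted] by eventually_elim simp
  next
    case (step t)
    interpret finite_measure_subalgebra M "F s"
      using assms(1) filtration by (rule is_filtration_finite_measure_subalgebra)
    interpret T: finite_measure_subalgebra M "F t"
      using assms(1) filtration by (rule is_filtration_finite_measure_subalgebra)
    have "AE x in M. real_cond_exp M (F s) (real_cond_exp M (F t) (Y (Suc t))) x
            = real_cond_exp M (F s) (Y (Suc t)) x"
      using is_filtration_subalgebra[OF filtration] is_filtration_subalgebra_mono[OF filtration step(1)]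
      by (intro real_cond_exp_nested_subalg integrable)
    moreover have "AE x in M. real_cond_exp M (F s) (real_cond_exp M (F t) (Y (Suc t))) x
            \<le> real_cond_exp M (F s) (Y t) x"
      by (intro real_cond_exp_mono one_step T.real_cond_exp_int(1) integrable)
    ultimately show ?case
      using step.IH by eventually_elim simp
  qed
  then show ?thesis
    using adapted integrable by (simp add: supermartingale_def)
qed

lemma M_SN_eq_prod_sn_factor:
  "M_SN X lam \<mu> \<sigma> t \<omega> = (\<Prod>i\<in>{1..t}. sn_factor (lam i \<omega>) (X i \<omega> - \<mu>) \<sigma>)"
  by (simp add: M_SN_def sn_factor_def)

lemma M_SN_Suc:
  "M_SN X lam \<mu> \<sigma> (Suc t) = (\<lambda>\<omega>. M_SN X lam \<mu> \<sigma> t \<omega> * sn_factor (lam (Suc t) \<omega>) (X (Suc t) \<omega> - \<mu>) \<sigma>)"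
  by (simp add: M_SN_eq_prod_sn_factor prod.cl_ivl_Suc fun_eq_iff)

lemma M_SN_nonneg: "0 \<le> M_SN X lam \<mu> \<sigma> t \<omega>"
  unfolding M_SN_eq_prod_sn_factor by (intro prod_nonneg) (simp add: sn_factor_pos less_imp_le)

lemma M_SN_le: "M_SN X lam \<mu> \<sigma> t \<omega> \<le> exp (3 / 2) ^ t"
  unfolding M_SN_eq_prod_sn_factor
  by (rule prod_le_power) (auto simp: sn_factor_pos less_imp_le sn_factor_le_exp_3_2)

lemma M_SN_measurable:
  assumes "is_filtration M F"
    and "\<And>i. i \<ge> 1 \<Longrightarrow> X i \<in> borel_measurable (F i)"
    and "\<And>i. i \<ge> 1 \<Longrightarrow> lam i \<in> borel_measurable (F (i - 1))"
  shows "M_SN X lam \<mu> \<sigma> t \<in> borel_measurable (F t)"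
  unfolding M_SN_def
proof (rule borel_measurable_prod)
  fix i assume "i \<in> {1..t}"
  then have "1 \<le> i" "i - 1 \<le> t" "i \<le> t" by auto
  then have [measurable]: "X i \<in> borel_measurable (F t)" "lam i \<in> borel_measurable (F t)"
    using assms(2,3)[of i] by (auto intro: measurable_from_subalg[OF is_filtration_subalgebra_mono[OF assms(1)]])
  show "(\<lambda>\<omega>. exp (lam i \<omega> * (X i \<omega> - \<mu>) - (lam i \<omega>)\<^sup>2 * ((X i \<omega> - \<mu>)\<^sup>2 + 2 * \<sigma>\<^sup>2) / 6))
          \<in> borel_measurable (F t)"
    by measurable
qed

theorem lemma4:
  fixes M :: "'a measure" and F :: "nat \<Rightarrow> 'a measure"
    and X lam :: "nat \<Rightarrow> 'a \<Rightarrow> real" and \<mu> \<sigma> :: real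
  assumes "prob_space M"
    and "is_filtration M F"
    and "sets (F 0) = {{}, space M}"
    and "\<And>t. t \<ge> 1 \<Longrightarrow> X t \<in> borel_measurable (F t)"
    and "\<And>t. t \<ge> 1 \<Longrightarrow> integrable M (X t)"
    and "\<And>t. t \<ge> 1 \<Longrightarrow> AE \<omega> in M. real_cond_exp M (F (t - 1)) (X t) \<omega> = \<mu>"
    and "\<And>t. t \<ge> 1 \<Longrightarrow> AE \<omega> in M.
           nn_cond_exp M (F (t - 1)) (\<lambda>\<omega>. ennreal ((X t \<omega> - \<mu>)\<^sup>2)) \<omega> \<le> ennreal (\<sigma>\<^sup>2)"
    and "\<And>t. t \<ge> 1 \<Longrightarrow> lam t \<in> borel_measurable (F (t - 1))"
  shows "(\<forall>t \<omega>. M_SN X lam \<mu> \<sigma> t \<omega> \<ge> 0) \<and> supermartingale M F (M_SN X lam \<mu> \<sigma>)"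
proof -
  interpret prob_space M by (rule assms(1))
  have adapted: "M_SN X lam \<mu> \<sigma> t \<in> borel_measurable (F t)" for t
    using assms(2,4,8) by (rule M_SN_measurable)
  have integrable: "integrable M (M_SN X lam \<mu> \<sigma> t)" for t
    using measurable_from_subalg[OF is_filtration_subalgebra[OF assms(2)] adapted]
    by (intro integrable_const_bound[where B = "exp (3 / 2) ^ t"]) (auto simp: M_SN_nonneg M_SN_le)
  have "AE \<omega> in M. real_cond_exp M (F k) (M_SN X lam \<mu> \<sigma> (Suc k)) \<omega> \<le> M_SN X lam \<mu> \<sigma> k \<omega>" for k
  proof -
    interpret finite_measure_subalgebra M "F k"
      using finite_measure_axioms assms(2) by (rule is_filtration_finite_measure_subalgebra)
    have lam_F [measurable]: "lam (Suc k) \<in> borel_measurable (F k)"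
      using assms(8)[of "Suc k"] by simp
    have [measurable]: "lam (Suc k) \<in> borel_measurable M" "X (Suc k) \<in> borel_measurable M"
      using measurable_from_subalg[OF subalg lam_F] borel_measurable_integrable[OF assms(5)[of "Suc k"]]
      by simp_all
    have [measurable]: "(\<lambda>\<omega>. sn_factor (lam (Suc k) \<omega>) (X (Suc k) \<omega> - \<mu>) \<sigma>) \<in> borel_measurable M"
      unfolding sn_factor_def by measurable
    have "AE \<omega> in M. real_cond_exp M (F k) (\<lambda>\<omega>. sn_factor (lam (Suc k) \<omega>) (X (Suc k) \<omega> - \<mu>) \<sigma>) \<omega> \<le> 1"
      using assms(5-7)[of "Suc k"] by (intro real_cond_exp_sn_factor_centered_le_one) simp_all
    then show ?thesis
      using integrable[of "Suc k"] unfolding M_SN_Suc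
      by (intro real_cond_exp_mult_le_self adapted M_SN_nonneg) simp_all
  qed
  then have "supermartingale M F (M_SN X lam \<mu> \<sigma>)"
    by (rule supermartingaleI_one_step[OF finite_measure_axioms assms(2) adapted integrable])
  then show ?thesis
    by (simp add: M_SN_nonneg)
qed

end
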